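(* Let $d\ge1$, $0<s<1$, $1\le q<\infty$, $p\ge 1$, and let $\gamma\in\mathbb{R}$. Let $u:\mathbb{R}^d\to\mathbb{R}$ be measurable with $\int_{\mathbb{R}^d}|u(x)|^q|x|^{\gamma-d}\,dx<\infty$. Then for every $t\in(0,\infty)\setminus\{1\}$, $$\int_{0}^{\infty}\int_{\mathbb{S}^{d-1}}\int_{\mathbb{S}^{d-1}}r^{\gamma-1}\frac{|u(r\omega)-u(rt\sigma)|^q}{|\omega-t\sigma|^{d+sp}}\,d\sigma\,d\omega\,dr\geq\left|1-t^{-\gamma/q}\right|^q\Phi(t)\int_{\mathbb{R}^d}|u(x)|^q|x|^{\gamma-d}\,dx,$$ where $\Phi(t)=\int_{\mathbb{S}^{d-1}}|e_d-t\sigma|^{-d-sp}\,d\sigma$.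
   Context: $\mathbb{S}^{d-1}$ is the unit sphere of $\mathbb{R}^d$ with surface measure $d\sigma$ (counting measure on $\{\pm1\}$ if $d=1$), and $e_d=(0,\dots,0,1)$. By rotation invariance $\Phi(t)=\int_{\mathbb{S}^{d-1}}|\omega-t\sigma|^{-d-sp}\,d\sigma$ for every $\omega\in\mathbb{S}^{d-1}$, and $\Phi(t)<\infty$ for $t\neq 1$. *)

theory Defs
  imports "HOL-Analysis.Analysis"
begin

text \<open>Surface measure on the unit sphere of a Euclidean space, defined via the cone
  construction: sigma(A) = d * lambda({x : 0 < norm x < 1, x / norm x in A}),
  i.e. the push-forward of d times Lebesgue measure on the punctured unit ball
  under the radial projection x / norm x.  It is concentrated on sphere 0 1.
  For d = 1 this is the counting measure on the two points of the sphere.\<close>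
definition sphere_measure :: "'a::euclidean_space measure" where
  "sphere_measure =
     distr (density lborel (\<lambda>x. of_nat DIM('a) * indicator (ball 0 1 - {0}) x))
           borel (\<lambda>x. x /\<^sub>R norm x)"

definition Phi :: "'a::euclidean_space \<Rightarrow> real \<Rightarrow> real \<Rightarrow> real \<Rightarrow> ennreal" where
  "Phi e s p t =
     (\<integral>\<^sup>+ \<sigma>. ennreal (norm (e - t *\<^sub>R \<sigma>) powr (- (real DIM('a) + s * p))) \<partial>sphere_measure)"

end

theory Submission
  imports Defs
begin

text \<open>
  Put \<open>\<theta> = t powr (- \<gamma> / q)\<close> and suppose \<open>\<theta> < 1\<close>. Convexity of \<open>s \<mapsto> s powr q\<close> gives
  \<open>\<bar>a\<bar> powr q \<le> (1 - \<theta>) powr (1 - q) * \<bar>a - b\<bar> powr q + \<theta> powr (1 - q) * \<bar>b\<bar> powr q\<close>; with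
  \<open>a = u(r\<omega>)\<close>, \<open>b = u(rt\<sigma>)\<close>, integrated against \<open>r powr (\<gamma> - 1) * \<bar>\<omega> - t\<sigma>\<bar> powr (-d - sp)\<close>, this bounds
  the integral \<open>A\<close> of \<open>\<bar>u(r\<omega>)\<bar> powr q\<close> by the left-hand side \<open>D\<close> and the integral \<open>B\<close> of
  \<open>\<bar>u(rt\<sigma>)\<bar> powr q\<close>. By rotation invariance of the sphere measure the kernel integrates to \<open>\<Phi>(t)\<close>
  in \<open>\<sigma>\<close>, and, since \<open>\<bar>\<omega> - t\<sigma>\<bar> = \<bar>\<sigma> - t\<omega>\<bar>\<close>, also in \<open>\<omega>\<close>; polar coordinates and the substitution
  \<open>r \<mapsto> rt\<close> then give \<open>A = \<Phi>(t) I\<close> and \<open>B = t powr (-\<gamma>) * \<Phi>(t) I = \<theta> powr q * A\<close>, where \<open>I\<close> is the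
  weighted norm of \<open>u\<close>. Since \<open>A\<close> is finite, \<open>A \<le> (1 - \<theta>) powr (1 - q) * D + \<theta> A\<close> rearranges to
  \<open>D \<ge> (1 - \<theta>) powr q * A\<close>; for \<open>\<theta> > 1\<close> the roles of \<open>a\<close> and \<open>b\<close> are exchanged.

  On the measure-theoretic side, \<open>u\<close> may be replaced by a Borel representative because a null set
  meets almost every sphere centred at 0 in a null set; polar coordinates follow from the cone
  construction of the sphere measure; and Lebesgue measure is rotation invariant because rotations
  map balls to balls of the same radius and, by Vitali's covering theorem, every open set is a
  disjoint union of balls up to a null set.
\<close>

section \<open>The surface measure of the sphere\<close>

lemma sets_sphere_measure [measurable_cong, simp]:
  "sets (sphere_measure :: 'a::euclidean_space measure) = sets borel"
  by (simp add: sphere_measure_def)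

lemma space_sphere_measure [simp]: "space (sphere_measure :: 'a::euclidean_space measure) = UNIV"
  by (simp add: sphere_measure_def)

lemma sets_borel_ball [measurable]: "ball c r \<in> sets borel"
  by simp

lemma nn_integral_sphere_measure:
  fixes F :: "'a::euclidean_space \<Rightarrow> ennreal"
  assumes [measurable]: "F \<in> borel_measurable borel"
  shows "(\<integral>\<^sup>+\<sigma>. F \<sigma> \<partial>sphere_measure) =
     (\<integral>\<^sup>+x. of_nat DIM('a) * indicator (ball 0 1 - {0}) x * F (x /\<^sub>R norm x) \<partial>lborel)"
  unfolding sphere_measure_def by (simp add: nn_integral_distr nn_integral_density mult.assoc)

interpretation sphere_measure: finite_measure "sphere_measure :: 'a::euclidean_space measure"
proof
  have "emeasure (sphere_measure :: 'a measure) UNIV = (\<integral>\<^sup>+\<sigma>. 1 \<partial>(sphere_measure :: 'a measure))"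
    by simp
  also have "\<dots> = (\<integral>\<^sup>+x. of_nat DIM('a) * indicator (ball (0::'a) 1 - {0}) x \<partial>lborel)"
    by (subst nn_integral_sphere_measure) auto
  also have "\<dots> \<le> (\<integral>\<^sup>+x. of_nat DIM('a) * indicator (cball (0::'a) 1) x \<partial>lborel)"
    by (intro nn_integral_mono mult_left_mono) (auto split: split_indicator)
  also have "\<dots> = of_nat DIM('a) * emeasure lborel (cball (0::'a) 1)"
    by (subst nn_integral_cmult) (auto intro: borel_measurable_indicator borel_closed)
  also have "\<dots> < \<infinity>"
    by (simp add: emeasure_cball ennreal_mult_less_top ennreal_of_nat_eq_real_of_nat)
  finally show "emeasure (sphere_measure :: 'a measure) (space sphere_measure) \<noteq> \<infinity>"
    by simp
qed

lemma AE_sphere_measure_norm: "AE \<sigma> in (sphere_measure :: 'a::euclidean_space measure). norm \<sigma> = 1"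
proof -
  have "(\<integral>\<^sup>+\<sigma>. indicator {\<sigma>::'a. norm \<sigma> \<noteq> 1} \<sigma> \<partial>sphere_measure) = 0"
  proof (subst nn_integral_sphere_measure)
    have "of_nat DIM('a) * indicator (ball 0 1 - {0}) x *
        indicator {\<sigma>::'a. norm \<sigma> \<noteq> 1} (x /\<^sub>R norm x) = (0::ennreal)" for x :: 'a
      by (simp add: indicator_def field_simps)
    then show "(\<integral>\<^sup>+x. of_nat DIM('a) * indicator (ball 0 1 - {0}) x *
        indicator {\<sigma>::'a. norm \<sigma> \<noteq> 1} (x /\<^sub>R norm x) \<partial>lborel) = 0"
      by (simp del: mult_eq_0_iff)
  qed simp
  then show ?thesis
    by (subst (asm) nn_integral_0_iff_AE) (auto simp: indicator_def)
qed

lemma pair_sigma_finite_sphere_measure: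
  "pair_sigma_finite (sphere_measure :: 'a::euclidean_space measure) sphere_measure"
  by (simp add: pair_sigma_finite_def sphere_measure.sigma_finite_measure_axioms)

section \<open>Rotation invariance\<close>

lemma borel_measurable_linear:
  fixes T :: "'a::euclidean_space \<Rightarrow> 'b::euclidean_space"
  shows "linear T \<Longrightarrow> T \<in> borel_measurable borel"
  by (intro borel_measurable_continuous_onI linear_continuous_on)
    (simp add: linear_conv_bounded_linear)

lemma null_sets_lborel_linear_vimage:
  fixes T :: "'a::euclidean_space \<Rightarrow> 'a"
  assumes T: "linear T" "inj T" and N: "N \<in> null_sets lborel"
  shows "T -` N \<in> null_sets lborel"
proof -
  have [measurable]: "T \<in> borel_measurable borel" "N \<in> sets borel"
    using borel_measurable_linear[OF T(1)] N by auto
  have "negligible {x \<in> UNIV. T x \<in> N}"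
    using N T by (intro negligible_differentiable_vimage[where f'="\<lambda>_. T"])
      (auto simp: negligible_iff_null_sets null_sets_completionI linear_imp_has_derivative)
  then show ?thesis
    by (subst null_sets_completion_iff[symmetric]) (auto simp: negligible_iff_null_sets vimage_def)
qed

lemma emeasure_lborel_ball_center:
  "emeasure lborel (ball (a::'a::euclidean_space) r) = emeasure lborel (ball (b::'a) r)"
  by (cases "0 \<le> r") (simp_all add: emeasure_ball ball_empty)

lemma open_ae_disjoint_Union_balls:
  fixes U :: "'a::euclidean_space set"
  assumes U: "open U"
  obtains C where "countable C" "disjoint_family_on (\<lambda>i. ball (fst i) (snd i)) C"
    "(\<Union>i\<in>C. ball (fst i) (snd i)) \<subseteq> U" "U - (\<Union>i\<in>C. ball (fst i) (snd i)) \<in> null_sets lborel"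
proof -
  let ?K = "{(x, \<rho>). ball x \<rho> \<subseteq> U}"
  obtain C where C: "countable C" "C \<subseteq> ?K"
    and disj: "pairwise (\<lambda>i j. disjnt (ball (fst i) (snd i)) (ball (fst j) (snd j))) C"
    and neg: "negligible (U - (\<Union>i\<in>C. ball (fst i) (snd i)))"
  proof (rule Vitali_covering_theorem_balls[of U ?K fst snd])
    fix x d assume "x \<in> U" "0 < (d::real)"
    then obtain e where "0 < e" "ball x e \<subseteq> U"
      using U open_contains_ball by blast
    with \<open>0 < d\<close> show "\<exists>i. i \<in> ?K \<and> x \<in> ball (fst i) (snd i) \<and> snd i < d"
      by (intro exI[of _ "(x, min e d / 2)"]) auto
  qed
  have "U - (\<Union>i\<in>C. ball (fst i) (snd i)) \<in> sets borel"
    using U by (intro sets.Diff borel_open) auto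
  then have "U - (\<Union>i\<in>C. ball (fst i) (snd i)) \<in> null_sets lborel"
    using neg by (subst null_sets_completion_iff[symmetric]) (auto simp: negligible_iff_null_sets)
  moreover have "(\<Union>i\<in>C. ball (fst i) (snd i)) \<subseteq> U"
    using C(2) by fastforce
  ultimately show ?thesis
    using that C(1) disj by (auto simp: pairwise_def disjoint_family_on_def disjnt_def)
qed

lemma emeasure_lborel_orthogonal_vimage_open:
  fixes T :: "'a::euclidean_space \<Rightarrow> 'a"
  assumes T: "orthogonal_transformation T" and U: "open U"
  shows "emeasure lborel (T -` U) = emeasure lborel U"
proof -
  have lin: "linear T" and inj: "inj T"
    using T by (simp_all add: orthogonal_transformation_linear orthogonal_transformation_inj)
  have T_borel: "T \<in> borel_measurable borel"
    using lin by (rule borel_measurable_linear)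
  have vimage_ball: "T -` ball c r = ball (inv T c) r" for c r
  proof -
    have "dist c (T x) = dist (inv T c) x" for x
      using orthogonal_transformation_norm[OF T, of "inv T c - x"] T
      by (simp add: dist_norm linear_diff[OF lin] orthogonal_transformation_surj surj_f_inv_f)
    then show ?thesis by auto
  qed
  obtain C where C: "countable C" and disj: "disjoint_family_on (\<lambda>i. ball (fst i) (snd i)) C"
    and V: "(\<Union>i\<in>C. ball (fst i) (snd i)) \<subseteq> U"
    and null: "U - (\<Union>i\<in>C. ball (fst i) (snd i)) \<in> null_sets lborel"
    using open_ae_disjoint_Union_balls[OF U] .
  define V where "V = (\<Union>i\<in>C. ball (fst i) (snd i))"
  have V_borel: "V \<in> sets borel"
    unfolding V_def by (intro borel_open) auto
  have "emeasure lborel U = emeasure lborel (V \<union> (U - V))"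
    using V by (simp add: V_def Un_absorb1)
  also have "\<dots> = emeasure lborel V"
    using null V_borel by (intro emeasure_Un_null_set) (auto simp: V_def)
  also have "\<dots> = (\<integral>\<^sup>+i. emeasure lborel (ball (fst i) (snd i)) \<partial>count_space C)"
    using C disj unfolding V_def by (intro emeasure_UN_countable) auto
  also have "\<dots> = (\<integral>\<^sup>+i. emeasure lborel (T -` ball (fst i) (snd i)) \<partial>count_space C)"
    by (intro nn_integral_cong) (metis vimage_ball emeasure_lborel_ball_center)
  also have "\<dots> = emeasure lborel (T -` V)"
  proof -
    have "disjoint_family_on (\<lambda>i. T -` ball (fst i) (snd i)) C"
      using disj by (auto simp: disjoint_family_on_def simp flip: vimage_Int)
    then show ?thesis
      unfolding V_def vimage_UN using C by (intro emeasure_UN_countable[symmetric]) (auto simp: vimage_ball)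
  qed
  also have "\<dots> = emeasure lborel (T -` V \<union> T -` (U - V))"
    using null_sets_lborel_linear_vimage[OF lin inj null] measurable_sets[OF T_borel V_borel]
    by (intro emeasure_Un_null_set[symmetric]) (auto simp: V_def)
  also have "T -` V \<union> T -` (U - V) = T -` U"
    using V by (auto simp: V_def)
  finally show ?thesis ..
qed

lemma lborel_distr_orthogonal_transformation:
  fixes T :: "'a::euclidean_space \<Rightarrow> 'a"
  assumes T: "orthogonal_transformation T"
  shows "distr lborel borel T = lborel"
proof -
  have [measurable]: "T \<in> borel_measurable borel"
    using T by (simp add: borel_measurable_linear orthogonal_transformation_linear)
  show ?thesis
    by (rule lborel_eqI[symmetric])
      (simp_all add: emeasure_distr emeasure_lborel_orthogonal_vimage_open[OF T]
        emeasure_lborel_box_eq open_box)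
qed

lemma orthogonal_transformation_exists_norm_eq:
  fixes a b :: "'a::real_inner"
  assumes ab: "norm a = norm b"
  obtains T where "orthogonal_transformation T" "T a = b"
proof (cases "a = b")
  case True
  then show ?thesis by (intro that[of "\<lambda>x. x"]) auto
next
  case False
  define v where "v = b - a"
  have vv: "v \<bullet> v \<noteq> 0" using False by (simp add: v_def)
  define T where "T x = x - (2 * (x \<bullet> v) / (v \<bullet> v)) *\<^sub>R v" for x
  have "linear T"
    unfolding T_def by (rule linearI) (simp_all add: inner_add_left algebra_simps add_divide_distrib)
  moreover have "T x \<bullet> T x = x \<bullet> x" for x
    using vv by (simp add: T_def inner_diff_left inner_diff_right inner_commute field_simps power2_eq_square)
  ultimately have "orthogonal_transformation T"
    by (simp add: orthogonal_transformation norm_eq_sqrt_inner)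
  moreover have "T a = b"
  proof -
    have "a \<bullet> a = b \<bullet> b" using ab by (simp add: dot_square_norm)
    then have "2 * (a \<bullet> v) / (v \<bullet> v) = -1"
      using vv by (simp add: v_def inner_diff_left inner_diff_right inner_commute field_simps)
    then show ?thesis by (simp add: T_def v_def)
  qed
  ultimately show ?thesis by (rule that)
qed

lemma nn_integral_sphere_measure_orthogonal:
  fixes T :: "'a::euclidean_space \<Rightarrow> 'a" and F :: "'a \<Rightarrow> ennreal"
  assumes T: "orthogonal_transformation T" and [measurable]: "F \<in> borel_measurable borel"
  shows "(\<integral>\<^sup>+\<sigma>. F (T \<sigma>) \<partial>sphere_measure) = (\<integral>\<^sup>+\<sigma>. F \<sigma> \<partial>sphere_measure)"
proof -
  have [measurable]: "T \<in> borel_measurable borel"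
    using T by (simp add: borel_measurable_linear orthogonal_transformation_linear)
  define h where "h x = of_nat DIM('a) * indicator (ball 0 1 - {0}) x * F (x /\<^sub>R norm x)" for x :: 'a
  have [measurable]: "h \<in> borel_measurable borel"
    unfolding h_def by measurable
  have h_T: "h (T x) = of_nat DIM('a) * indicator (ball 0 1 - {0}) x * F (T (x /\<^sub>R norm x))" for x
  proof -
    have "norm (T x) = norm x" "T x = 0 \<longleftrightarrow> x = 0"
      using orthogonal_transformation_norm[OF T, of x] by auto
    then show ?thesis
      by (simp add: h_def indicator_def orthogonal_transformation_scaleR[OF T])
  qed
  have "(\<integral>\<^sup>+\<sigma>. F \<sigma> \<partial>sphere_measure) = (\<integral>\<^sup>+x. h x \<partial>distr lborel borel T)"
    by (simp add: h_def nn_integral_sphere_measure lborel_distr_orthogonal_transformation[OF T])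
  also have "\<dots> = (\<integral>\<^sup>+x. h (T x) \<partial>lborel)"
    by (simp add: nn_integral_distr)
  also have "\<dots> = (\<integral>\<^sup>+\<sigma>. F (T \<sigma>) \<partial>sphere_measure)"
    by (simp add: h_T nn_integral_sphere_measure)
  finally show ?thesis ..
qed

lemma nn_integral_sphere_measure_norm_diff:
  fixes f :: "real \<Rightarrow> ennreal" and \<omega> e :: "'a::euclidean_space"
  assumes [measurable]: "f \<in> borel_measurable borel" and "norm \<omega> = norm e"
  shows "(\<integral>\<^sup>+\<sigma>. f (norm (\<omega> - t *\<^sub>R \<sigma>)) \<partial>sphere_measure) =
    (\<integral>\<^sup>+\<sigma>. f (norm (e - t *\<^sub>R \<sigma>)) \<partial>sphere_measure)"
proof -
  obtain T where T: "orthogonal_transformation T" "T e = \<omega>"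
    using orthogonal_transformation_exists_norm_eq assms(2) by metis
  have "norm (\<omega> - t *\<^sub>R T \<sigma>) = norm (e - t *\<^sub>R \<sigma>)" for \<sigma>
    using orthogonal_transformation_norm[OF T(1), of "e - t *\<^sub>R \<sigma>"] T
    by (simp add: linear_diff orthogonal_transformation_linear orthogonal_transformation_scaleR)
  then show ?thesis
    using nn_integral_sphere_measure_orthogonal[OF T(1), of "\<lambda>\<sigma>. f (norm (\<omega> - t *\<^sub>R \<sigma>))"]
    by simp
qed

section \<open>Polar coordinates\<close>

lemma nn_integral_lborel_scaleR:
  fixes f :: "'a::euclidean_space \<Rightarrow> ennreal"
  assumes [measurable]: "f \<in> borel_measurable borel" and c: "c \<noteq> 0"
  shows "(\<integral>\<^sup>+x. f x \<partial>lborel) = ennreal (\<bar>c\<bar> ^ DIM('a)) * (\<integral>\<^sup>+y. f (c *\<^sub>R y) \<partial>lborel)"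
  by (subst lborel_affine[OF c, of 0])
    (simp add: nn_integral_density nn_integral_distr nn_integral_cmult)

lemma nn_integral_powr_tail:
  fixes a n :: real
  assumes "0 < a" "0 < n"
  shows "(\<integral>\<^sup>+l. indicator {a<..} l * ennreal (l powr (- n - 1)) \<partial>lborel) = ennreal (a powr (- n) / n)"
proof -
  have integral: "((\<lambda>l. l powr (- n - 1)) has_integral a powr (- n) / n) {a..}"
    using has_integral_powr_to_inf[of "- n - 1" a] assms by simp
  have "(\<integral>\<^sup>+l. ennreal (l powr (- n - 1)) * indicator {a..} l \<partial>lborel) = ennreal (a powr (- n) / n)"
    by (rule nn_integral_has_integral_lebesgue'[OF _ integral]) simp
  moreover have "AE l in lborel. indicator {a<..} l * ennreal (l powr (- n - 1)) =
      ennreal (l powr (- n - 1)) * indicator {a..} l"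
    using AE_lborel_singleton[of a] by eventually_elim (auto simp: indicator_def)
  ultimately show ?thesis
    by (subst nn_integral_cong_AE) auto
qed

lemma nn_integral_radial_scale:
  fixes f :: "real \<Rightarrow> ennreal" and a c :: real
  assumes [measurable]: "f \<in> borel_measurable borel" and c: "0 < c"
  shows "(\<integral>\<^sup>+r. indicator {0<..} r * ennreal (r powr a) * f (c * r) \<partial>lborel) =
    ennreal (c powr (- a - 1)) * (\<integral>\<^sup>+r. indicator {0<..} r * ennreal (r powr a) * f r \<partial>lborel)"
proof -
  have "(\<integral>\<^sup>+r. indicator {0<..} r * ennreal (r powr a) * f r \<partial>lborel) =
      ennreal c * (\<integral>\<^sup>+r. indicator {0<..} (c * r) * ennreal ((c * r) powr a) * f (c * r) \<partial>lborel)"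
    using nn_integral_real_affine[of "\<lambda>r. indicator {0<..} r * ennreal (r powr a) * f r" c 0] c
    by simp
  also have "\<dots> = ennreal (c powr (a + 1)) *
      (\<integral>\<^sup>+r. indicator {0<..} r * ennreal (r powr a) * f (c * r) \<partial>lborel)"
    using c by (simp add: nn_integral_cmult[symmetric] powr_mult powr_add ennreal_mult' ac_simps
        zero_less_mult_iff indicator_def)
  finally have "ennreal (c powr (- a - 1)) * (\<integral>\<^sup>+r. indicator {0<..} r * ennreal (r powr a) * f r \<partial>lborel) =
      ennreal (c powr (- a - 1) * c powr (a + 1)) *
      (\<integral>\<^sup>+r. indicator {0<..} r * ennreal (r powr a) * f (c * r) \<partial>lborel)"
    by (simp add: ennreal_mult' mult.assoc)
  also have "c powr (- a - 1) * c powr (a + 1) = 1"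
    using c by (simp flip: powr_add)
  finally show ?thesis by simp
qed

lemma nn_integral_ray_normalize:
  fixes F :: "'a::euclidean_space \<Rightarrow> ennreal" and x :: 'a
  assumes [measurable]: "F \<in> borel_measurable borel" and x: "x \<noteq> 0"
  shows "(\<integral>\<^sup>+r. indicator {0<..} r * ennreal (r powr a) * F (r *\<^sub>R (x /\<^sub>R norm x)) \<partial>lborel) =
    ennreal (norm x powr (a + 1)) * (\<integral>\<^sup>+l. indicator {0<..} l * ennreal (l powr a) * F (l *\<^sub>R x) \<partial>lborel)"
  using nn_integral_radial_scale[of "\<lambda>l. F (l *\<^sub>R x)" "inverse (norm x)" a] x
  by (simp add: inverse_powr add.commute mult.commute flip: powr_minus)

lemma nn_integral_ball_dilation:
  fixes F :: "'a::euclidean_space \<Rightarrow> ennreal"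
  defines "n \<equiv> real DIM('a)"
  assumes [measurable]: "F \<in> borel_measurable borel" and l: "0 < l"
  shows "(\<integral>\<^sup>+x. indicator (ball 0 1) x * ennreal (norm x powr n) * F (l *\<^sub>R x) \<partial>lborel) =
    ennreal (l powr (- 2 * n)) * (\<integral>\<^sup>+y. indicator (ball 0 l) y * ennreal (norm y powr n) * F y \<partial>lborel)"
proof -
  have "indicator (ball 0 l) (l *\<^sub>R x) * ennreal (norm (l *\<^sub>R x) powr n) * F (l *\<^sub>R x) =
      ennreal (l powr n) * (indicator (ball 0 1) x * ennreal (norm x powr n) * F (l *\<^sub>R x))" for x :: 'a
    using l by (simp add: indicator_def powr_mult ennreal_mult' mult.assoc)
  then have "(\<integral>\<^sup>+y. indicator (ball 0 l) y * ennreal (norm y powr n) * F y \<partial>lborel) =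
      ennreal (l powr n) * ennreal (l powr n) *
      (\<integral>\<^sup>+x. indicator (ball 0 1) x * ennreal (norm x powr n) * F (l *\<^sub>R x) \<partial>lborel)"
    using nn_integral_lborel_scaleR[of "\<lambda>y. indicator (ball 0 l) y * ennreal (norm y powr n) * F y" l] l
    by (simp add: nn_integral_cmult n_def powr_realpow mult.assoc)
  moreover have "ennreal (l powr (- 2 * n)) * (ennreal (l powr n) * ennreal (l powr n)) = 1"
    using l by (simp add: ennreal_mult'[symmetric] flip: powr_add)
  ultimately show ?thesis
    by (simp add: mult.assoc[symmetric])
qed

lemma nn_integral_ball_slice:
  fixes F :: "'a::euclidean_space \<Rightarrow> ennreal"
  defines "n \<equiv> real DIM('a)"
  assumes [measurable]: "F \<in> borel_measurable borel"
  shows "(\<integral>\<^sup>+x. indicator {0<..} l * ennreal (l powr (n - 1)) *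
      (indicator (ball 0 1) x * ennreal (norm x powr n) * F (l *\<^sub>R x)) \<partial>lborel) =
    (\<integral>\<^sup>+y. indicator {norm y<..} l * ennreal (l powr (- n - 1)) * ennreal (norm y powr n) * F y \<partial>lborel)"
proof (cases "0 < l")
  case l: True
  have "ennreal (l powr (n - 1)) * ennreal (l powr (- 2 * n)) = ennreal (l powr (- n - 1))"
    using l by (simp add: ennreal_mult'[symmetric] flip: powr_add)
  moreover have "(\<integral>\<^sup>+x. indicator {0<..} l * ennreal (l powr (n - 1)) *
      (indicator (ball 0 1) x * ennreal (norm x powr n) * F (l *\<^sub>R x)) \<partial>lborel) =
    indicator {0<..} l * ennreal (l powr (n - 1)) *
      (\<integral>\<^sup>+x. indicator (ball 0 1) x * ennreal (norm x powr n) * F (l *\<^sub>R x) \<partial>lborel)"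
    by (rule nn_integral_cmult) measurable
  ultimately have "(\<integral>\<^sup>+x. indicator {0<..} l * ennreal (l powr (n - 1)) *
      (indicator (ball 0 1) x * ennreal (norm x powr n) * F (l *\<^sub>R x)) \<partial>lborel) =
    ennreal (l powr (- n - 1)) * (\<integral>\<^sup>+y. indicator (ball 0 l) y * ennreal (norm y powr n) * F y \<partial>lborel)"
    using l by (simp add: nn_integral_ball_dilation n_def mult.assoc[symmetric])
  also have "\<dots> = (\<integral>\<^sup>+y. indicator {norm y<..} l * ennreal (l powr (- n - 1)) * ennreal (norm y powr n) * F y \<partial>lborel)"
    by (subst nn_integral_cmult[symmetric]) (auto intro!: nn_integral_cong simp: indicator_def mult.assoc)
  finally show ?thesis .
next
  case False
  then have "\<not> norm y < l" for y :: 'a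
    using norm_ge_zero[of y] by linarith
  then show ?thesis using False by (simp add: indicator_def)
qed

lemma nn_integral_cone:
  fixes F :: "'a::euclidean_space \<Rightarrow> ennreal"
  defines "n \<equiv> real DIM('a)"
  assumes [measurable]: "F \<in> borel_measurable borel"
  shows "(\<integral>\<^sup>+x. indicator (ball 0 1) x * ennreal (norm x powr n) *
      (\<integral>\<^sup>+l. indicator {0<..} l * ennreal (l powr (n - 1)) * F (l *\<^sub>R x) \<partial>lborel) \<partial>lborel) =
    ennreal (1 / n) * (\<integral>\<^sup>+y. F y \<partial>lborel)"
proof -
  have n: "0 < n" by (simp add: n_def)
  have [measurable]: "Measurable.pred (borel \<Otimes>\<^sub>M borel) (\<lambda>p::'a \<times> real. snd p \<in> {norm (fst p)<..})"
    unfolding greaterThan_iff by measurable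
  have "(\<integral>\<^sup>+x. indicator (ball 0 1) x * ennreal (norm x powr n) *
      (\<integral>\<^sup>+l. indicator {0<..} l * ennreal (l powr (n - 1)) * F (l *\<^sub>R x) \<partial>lborel) \<partial>lborel) =
    (\<integral>\<^sup>+x. \<integral>\<^sup>+l. indicator {0<..} l * ennreal (l powr (n - 1)) *
      (indicator (ball 0 1) x * ennreal (norm x powr n) * F (l *\<^sub>R x)) \<partial>lborel \<partial>lborel)"
    by (intro nn_integral_cong) (simp add: nn_integral_cmult[symmetric] ac_simps)
  also have "\<dots> = (\<integral>\<^sup>+l. \<integral>\<^sup>+x. indicator {0<..} l * ennreal (l powr (n - 1)) *
      (indicator (ball 0 1) x * ennreal (norm x powr n) * F (l *\<^sub>R x)) \<partial>lborel \<partial>lborel)"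
    by (rule lborel_pair.Fubini'[symmetric]) measurable
  also have "\<dots> = (\<integral>\<^sup>+l. \<integral>\<^sup>+y. indicator {norm y<..} l * ennreal (l powr (- n - 1)) *
      ennreal (norm y powr n) * F y \<partial>lborel \<partial>lborel)"
    unfolding n_def by (rule nn_integral_cong, rule nn_integral_ball_slice) simp
  also have "\<dots> = (\<integral>\<^sup>+y. \<integral>\<^sup>+l. indicator {norm y<..} l * ennreal (l powr (- n - 1)) *
      (ennreal (norm y powr n) * F y) \<partial>lborel \<partial>lborel)"
    by (subst lborel_pair.Fubini') (measurable, simp add: mult.assoc)
  also have "\<dots> = (\<integral>\<^sup>+y. ennreal (1 / n) * (indicator (- {0}) y * F y) \<partial>lborel)"
  proof (rule nn_integral_cong)
    fix y :: 'a
    show "(\<integral>\<^sup>+l. indicator {norm y<..} l * ennreal (l powr (- n - 1)) *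
        (ennreal (norm y powr n) * F y) \<partial>lborel) = ennreal (1 / n) * (indicator (- {0}) y * F y)"
    proof (cases "y = 0")
      case False
      have "norm y powr (- n) / n * norm y powr n = 1 / n"
        using False by (simp add: powr_minus field_simps)
      with False n show ?thesis
        by (simp add: nn_integral_multc nn_integral_powr_tail ennreal_mult'[symmetric] mult.assoc[symmetric])
    qed simp
  qed
  also have "\<dots> = ennreal (1 / n) * (\<integral>\<^sup>+y. indicator (- {0}) y * F y \<partial>lborel)"
    by (rule nn_integral_cmult) measurable
  also have "(\<integral>\<^sup>+y. indicator (- {0}) y * F y \<partial>lborel) = (\<integral>\<^sup>+y. F y \<partial>lborel)"
    by (intro nn_integral_cong_AE eventually_mono[OF AE_lborel_singleton[of 0]])
      (auto simp: indicator_def)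
  finally show ?thesis .
qed

lemma nn_integral_polar:
  fixes F :: "'a::euclidean_space \<Rightarrow> ennreal"
  assumes [measurable]: "F \<in> borel_measurable borel"
  shows "(\<integral>\<^sup>+r. indicator {0<..} r * ennreal (r powr (real DIM('a) - 1)) *
      (\<integral>\<^sup>+\<omega>. F (r *\<^sub>R \<omega>) \<partial>sphere_measure) \<partial>lborel) = (\<integral>\<^sup>+x. F x \<partial>lborel)"
    (is "?polar = _")
proof -
  define n where "n = real DIM('a)"
  have n: "0 < n" by (simp add: n_def)
  define D :: ennreal where "D = of_nat DIM('a)"
  define B where "B = ball (0::'a) 1 - {0}"
  have [measurable]: "B \<in> sets borel" by (simp add: B_def)
  have "?polar = (\<integral>\<^sup>+r. \<integral>\<^sup>+x. D * indicator B x *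
      (indicator {0<..} r * ennreal (r powr (n - 1)) * F (r *\<^sub>R (x /\<^sub>R norm x))) \<partial>lborel \<partial>lborel)"
    by (simp add: nn_integral_sphere_measure nn_integral_cmult[symmetric] n_def D_def B_def ac_simps)
  also have "\<dots> = (\<integral>\<^sup>+x. \<integral>\<^sup>+r. D * indicator B x *
      (indicator {0<..} r * ennreal (r powr (n - 1)) * F (r *\<^sub>R (x /\<^sub>R norm x))) \<partial>lborel \<partial>lborel)"
    by (rule lborel_pair.Fubini') measurable
  also have "\<dots> = (\<integral>\<^sup>+x. D * indicator B x *
      (\<integral>\<^sup>+r. indicator {0<..} r * ennreal (r powr (n - 1)) * F (r *\<^sub>R (x /\<^sub>R norm x)) \<partial>lborel) \<partial>lborel)"
    by (intro nn_integral_cong nn_integral_cmult) measurable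
  also have "\<dots> = (\<integral>\<^sup>+x. D * (indicator (ball 0 1) x * ennreal (norm x powr n) *
      (\<integral>\<^sup>+l. indicator {0<..} l * ennreal (l powr (n - 1)) * F (l *\<^sub>R x) \<partial>lborel)) \<partial>lborel)"
    using n nn_integral_ray_normalize[of F _ "n - 1"]
    by (intro nn_integral_cong) (auto simp: B_def indicator_def)
  also have "\<dots> = D * ennreal (1 / n) * (\<integral>\<^sup>+x. F x \<partial>lborel)"
    using nn_integral_cone[of F] by (subst nn_integral_cmult) (simp_all add: n_def mult.assoc)
  also have "D * ennreal (1 / n) = 1"
    using n by (simp add: D_def n_def ennreal_of_nat_eq_real_of_nat ennreal_mult'[symmetric])
  finally show ?thesis by simp
qed

lemma nn_integral_polar_weighted:
  fixes f :: "'a::euclidean_space \<Rightarrow> ennreal"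
  assumes [measurable]: "f \<in> borel_measurable borel"
  shows "(\<integral>\<^sup>+x. f x * ennreal (norm x powr (\<gamma> - real DIM('a))) \<partial>lborel) =
    (\<integral>\<^sup>+r. indicator {0<..} r * ennreal (r powr (\<gamma> - 1)) * (\<integral>\<^sup>+\<omega>. f (r *\<^sub>R \<omega>) \<partial>sphere_measure) \<partial>lborel)"
proof -
  have "(\<integral>\<^sup>+x. f x * ennreal (norm x powr (\<gamma> - real DIM('a))) \<partial>lborel) =
      (\<integral>\<^sup>+r. indicator {0<..} r * ennreal (r powr (real DIM('a) - 1)) *
        (\<integral>\<^sup>+\<omega>. f (r *\<^sub>R \<omega>) * ennreal (norm (r *\<^sub>R \<omega>) powr (\<gamma> - real DIM('a))) \<partial>sphere_measure) \<partial>lborel)"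
    by (rule nn_integral_polar[symmetric]) measurable
  also have "\<dots> = (\<integral>\<^sup>+r. indicator {0<..} r * ennreal (r powr (\<gamma> - 1)) *
      (\<integral>\<^sup>+\<omega>. f (r *\<^sub>R \<omega>) \<partial>sphere_measure) \<partial>lborel)"
  proof (rule nn_integral_cong)
    fix r :: real
    have "(\<integral>\<^sup>+\<omega>. f (r *\<^sub>R \<omega>) * ennreal (norm (r *\<^sub>R \<omega>) powr (\<gamma> - real DIM('a))) \<partial>sphere_measure) =
        (\<integral>\<^sup>+\<omega>. ennreal (\<bar>r\<bar> powr (\<gamma> - real DIM('a))) * f (r *\<^sub>R \<omega>) \<partial>sphere_measure)"
      using AE_sphere_measure_norm by (intro nn_integral_cong_AE) (auto simp: mult.commute)
    also have "\<dots> = ennreal (\<bar>r\<bar> powr (\<gamma> - real DIM('a))) * (\<integral>\<^sup>+\<omega>. f (r *\<^sub>R \<omega>) \<partial>sphere_measure)"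
      by (rule nn_integral_cmult) measurable
    moreover have "0 < r \<Longrightarrow>
        ennreal (r powr (real DIM('a) - 1)) * ennreal (r powr (\<gamma> - real DIM('a))) = ennreal (r powr (\<gamma> - 1))"
      by (simp add: ennreal_mult'[symmetric] flip: powr_add)
    ultimately show "indicator {0<..} r * ennreal (r powr (real DIM('a) - 1)) *
        (\<integral>\<^sup>+\<omega>. f (r *\<^sub>R \<omega>) * ennreal (norm (r *\<^sub>R \<omega>) powr (\<gamma> - real DIM('a))) \<partial>sphere_measure) =
      indicator {0<..} r * ennreal (r powr (\<gamma> - 1)) * (\<integral>\<^sup>+\<omega>. f (r *\<^sub>R \<omega>) \<partial>sphere_measure)"
      by (cases "0 < r") (simp_all add: mult.assoc[symmetric])
  qed
  finally show ?thesis .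
qed

lemma AE_radius_AE_sphere_notin:
  fixes N :: "'a::euclidean_space set"
  assumes N: "N \<in> null_sets lborel"
  shows "AE r in lborel. 0 < r \<longrightarrow> (AE \<omega> in sphere_measure. r *\<^sub>R \<omega> \<notin> N)"
proof -
  have [measurable]: "N \<in> sets borel"
    using N by auto
  have "(\<integral>\<^sup>+r. indicator {0<..} r * ennreal (r powr (real DIM('a) - 1)) *
      (\<integral>\<^sup>+\<omega>. indicator N (r *\<^sub>R \<omega>) \<partial>sphere_measure) \<partial>lborel) = 0"
    using N by (subst nn_integral_polar) auto
  moreover have "(\<lambda>r. \<integral>\<^sup>+\<omega>. indicator N (r *\<^sub>R \<omega>) \<partial>(sphere_measure :: 'a measure)) \<in> borel_measurable lborel"
    by (rule sphere_measure.borel_measurable_nn_integral) measurable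
  ultimately have "AE r in lborel. indicator {0<..} r * ennreal (r powr (real DIM('a) - 1)) *
      (\<integral>\<^sup>+\<omega>. indicator N (r *\<^sub>R \<omega>) \<partial>(sphere_measure :: 'a measure)) = 0"
    by (subst (asm) nn_integral_0_iff_AE) auto
  then show ?thesis
  proof eventually_elim
    case (elim r)
    show ?case
    proof
      assume "0 < r"
      with elim have "(\<integral>\<^sup>+\<omega>. indicator N (r *\<^sub>R \<omega>) \<partial>(sphere_measure :: 'a measure)) = 0"
        by simp
      then show "AE \<omega> in sphere_measure. r *\<^sub>R \<omega> \<notin> N"
        by (subst (asm) nn_integral_0_iff_AE) (auto elim!: eventually_mono simp: indicator_def)
    qed
  qed
qed

section \<open>Integrals over pairs of spheres\<close>

text \<open>The kernel is a power with exponent \<open>- \<kappa>\<close>, so that the diagonal \<open>\<omega> = t\<sigma>\<close> contributes 0, just as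
  the real division by \<open>0 powr \<kappa> = 0\<close> does in the statement of the theorem.\<close>

definition polar_pair_integral ::
    "real \<Rightarrow> real \<Rightarrow> real \<Rightarrow> ('a::euclidean_space \<Rightarrow> 'a \<Rightarrow> ennreal) \<Rightarrow> ennreal" where
  "polar_pair_integral \<gamma> \<kappa> t F =
    (\<integral>\<^sup>+r. indicator {0<..} r * (\<integral>\<^sup>+\<omega>. \<integral>\<^sup>+\<sigma>. ennreal (r powr (\<gamma> - 1)) * F (r *\<^sub>R \<omega>) ((r * t) *\<^sub>R \<sigma>) *
      ennreal (norm (\<omega> - t *\<^sub>R \<sigma>) powr - \<kappa>) \<partial>sphere_measure \<partial>sphere_measure) \<partial>lborel)"

lemma polar_pair_integral_of_real:
  fixes F :: "'a::euclidean_space \<Rightarrow> 'a \<Rightarrow> real"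
  assumes "\<And>x y. 0 \<le> F x y"
  shows "(\<integral>\<^sup>+r. indicator {0<..} r * (\<integral>\<^sup>+\<omega>. \<integral>\<^sup>+\<sigma>.
      ennreal (r powr (\<gamma> - 1) * F (r *\<^sub>R \<omega>) ((r * t) *\<^sub>R \<sigma>) / norm (\<omega> - t *\<^sub>R \<sigma>) powr \<kappa>)
      \<partial>sphere_measure \<partial>sphere_measure) \<partial>lborel) =
    polar_pair_integral \<gamma> \<kappa> t (\<lambda>x y. ennreal (F x y))"
  unfolding polar_pair_integral_def using assms
  by (intro nn_integral_cong arg_cong2[where f="(*)"] refl)
    (simp add: powr_minus divide_inverse ennreal_mult)

lemma polar_pair_integral_cong_null:
  fixes F G :: "'a::euclidean_space \<Rightarrow> 'a \<Rightarrow> ennreal"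
  assumes N: "N \<in> null_sets lborel" and t: "t \<noteq> 0"
    and FG: "\<And>x y. x \<notin> N \<Longrightarrow> y \<notin> N \<Longrightarrow> F x y = G x y"
  shows "polar_pair_integral \<gamma> \<kappa> t F = polar_pair_integral \<gamma> \<kappa> t G"
proof -
  have N': "(\<lambda>y. t *\<^sub>R y) -` N \<in> null_sets lborel"
    using t by (intro null_sets_lborel_linear_vimage N) (auto simp: linear_scaleR inj_on_def)
  have "AE r in lborel. 0 < r \<longrightarrow>
      (AE \<omega> in sphere_measure. r *\<^sub>R \<omega> \<notin> N) \<and> (AE \<sigma> in sphere_measure. (r * t) *\<^sub>R \<sigma> \<notin> N)"
    using AE_radius_AE_sphere_notin[OF N] AE_radius_AE_sphere_notin[OF N']
    by eventually_elim (auto simp: mult.commute)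
  then show ?thesis
    unfolding polar_pair_integral_def
  proof (intro nn_integral_cong_AE, eventually_elim)
    case (elim r)
    then show ?case
      by (cases "0 < r") (auto intro!: nn_integral_cong_AE arg_cong2[where f="(*)"]
          elim!: eventually_mono simp: FG)
  qed
qed

lemma polar_pair_integral_eq_product:
  fixes F :: "'a::euclidean_space \<Rightarrow> 'a \<Rightarrow> ennreal"
  assumes [measurable]: "case_prod F \<in> borel_measurable (borel \<Otimes>\<^sub>M borel)"
  shows "polar_pair_integral \<gamma> \<kappa> t F =
    (\<integral>\<^sup>+(r, \<omega>, \<sigma>). indicator {0<..} r * (ennreal (r powr (\<gamma> - 1)) * F (r *\<^sub>R \<omega>) ((r * t) *\<^sub>R \<sigma>) *
      ennreal (norm (\<omega> - t *\<^sub>R \<sigma>) powr - \<kappa>)) \<partial>(lborel \<Otimes>\<^sub>M (sphere_measure \<Otimes>\<^sub>M sphere_measure)))"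
    (is "_ = ?product")
proof -
  have "polar_pair_integral \<gamma> \<kappa> t F = (\<integral>\<^sup>+r. \<integral>\<^sup>+(\<omega>, \<sigma>). indicator {0<..} r *
      (ennreal (r powr (\<gamma> - 1)) * F (r *\<^sub>R \<omega>) ((r * t) *\<^sub>R \<sigma>) * ennreal (norm (\<omega> - t *\<^sub>R \<sigma>) powr - \<kappa>))
      \<partial>(sphere_measure \<Otimes>\<^sub>M sphere_measure) \<partial>lborel)"
    unfolding polar_pair_integral_def
    by (intro nn_integral_cong)
      (simp add: sphere_measure.nn_integral_fst[symmetric] nn_integral_cmult[symmetric] split_beta')
  also have "\<dots> = ?product"
    by (simp add: sigma_finite_measure.nn_integral_fst[symmetric] split_beta'
        sigma_finite_pair_measure sphere_measure.sigma_finite_measure_axioms)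
  finally show ?thesis .
qed

lemma polar_pair_integral_mono:
  "(\<And>x y. F x y \<le> G x y) \<Longrightarrow> polar_pair_integral \<gamma> \<kappa> t F \<le> polar_pair_integral \<gamma> \<kappa> t G"
  unfolding polar_pair_integral_def
  by (intro nn_integral_mono mult_left_mono mult_right_mono) auto

lemma polar_pair_integral_linear_combination:
  fixes G H :: "'a::euclidean_space \<Rightarrow> 'a \<Rightarrow> ennreal"
  assumes [measurable]: "case_prod G \<in> borel_measurable (borel \<Otimes>\<^sub>M borel)"
    "case_prod H \<in> borel_measurable (borel \<Otimes>\<^sub>M borel)"
  shows "polar_pair_integral \<gamma> \<kappa> t (\<lambda>x y. a * G x y + b * H x y) =
    a * polar_pair_integral \<gamma> \<kappa> t G + b * polar_pair_integral \<gamma> \<kappa> t H"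
proof -
  let ?M = "lborel \<Otimes>\<^sub>M (sphere_measure \<Otimes>\<^sub>M sphere_measure) :: (real \<times> 'a \<times> 'a) measure"
  define w where "w = (\<lambda>(r, \<omega>, \<sigma>::'a). indicator {0<..} r * ennreal (r powr (\<gamma> - 1)) *
    ennreal (norm (\<omega> - t *\<^sub>R \<sigma>) powr - \<kappa>) :: ennreal)"
  define lift where "lift F = (\<lambda>(r, \<omega>, \<sigma>). F (r *\<^sub>R \<omega>) ((r * t) *\<^sub>R \<sigma>) :: ennreal)"
    for F :: "'a \<Rightarrow> 'a \<Rightarrow> ennreal"
  have [measurable]: "w \<in> borel_measurable ?M" "lift G \<in> borel_measurable ?M" "lift H \<in> borel_measurable ?M"
    unfolding w_def lift_def by measurable
  have product: "polar_pair_integral \<gamma> \<kappa> t F = (\<integral>\<^sup>+z. w z * lift F z \<partial>?M)"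
    if "case_prod F \<in> borel_measurable (borel \<Otimes>\<^sub>M borel)" for F
    using that by (simp add: polar_pair_integral_eq_product w_def lift_def split_beta' ac_simps)
  have "polar_pair_integral \<gamma> \<kappa> t (\<lambda>x y. a * G x y + b * H x y) =
      (\<integral>\<^sup>+z. a * (w z * lift G z) + b * (w z * lift H z) \<partial>?M)"
    by (subst product) (simp_all add: lift_def split_beta' distrib_left ac_simps)
  also have "\<dots> = a * (\<integral>\<^sup>+z. w z * lift G z \<partial>?M) + b * (\<integral>\<^sup>+z. w z * lift H z \<partial>?M)"
    by (simp add: nn_integral_add nn_integral_cmult)
  finally show ?thesis
    by (simp add: product)
qed

lemma polar_pair_integral_left:
  fixes f :: "'a::euclidean_space \<Rightarrow> ennreal" and e :: 'a
  assumes [measurable]: "f \<in> borel_measurable borel" and e: "norm e = 1"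
  shows "polar_pair_integral \<gamma> \<kappa> t (\<lambda>x y. f x) =
    (\<integral>\<^sup>+\<sigma>. ennreal (norm (e - t *\<^sub>R \<sigma>) powr - \<kappa>) \<partial>sphere_measure) *
    (\<integral>\<^sup>+x. f x * ennreal (norm x powr (\<gamma> - real DIM('a))) \<partial>lborel)"
proof -
  define \<Phi> where "\<Phi> = (\<integral>\<^sup>+\<sigma>. ennreal (norm (e - t *\<^sub>R \<sigma>) powr - \<kappa>) \<partial>(sphere_measure :: 'a measure))"
  have kernel: "(\<integral>\<^sup>+\<sigma>. c * ennreal (norm (\<omega> - t *\<^sub>R \<sigma>) powr - \<kappa>) \<partial>sphere_measure) = c * \<Phi>"
    if "norm \<omega> = 1" for c :: ennreal and \<omega> :: 'a
    using that e nn_integral_sphere_measure_norm_diff[of "\<lambda>n. ennreal (n powr - \<kappa>)" \<omega> e t]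
    by (simp add: nn_integral_cmult \<Phi>_def)
  have "polar_pair_integral \<gamma> \<kappa> t (\<lambda>x y. f x) = (\<integral>\<^sup>+r. indicator {0<..} r *
      (\<integral>\<^sup>+\<omega>. ennreal (r powr (\<gamma> - 1)) * f (r *\<^sub>R \<omega>) * \<Phi> \<partial>sphere_measure) \<partial>lborel)"
    unfolding polar_pair_integral_def using AE_sphere_measure_norm
    by (intro nn_integral_cong arg_cong2[where f="(*)"] refl nn_integral_cong_AE)
      (auto elim!: eventually_mono simp: kernel)
  also have "\<dots> = (\<integral>\<^sup>+r. \<Phi> * (indicator {0<..} r * ennreal (r powr (\<gamma> - 1)) *
      (\<integral>\<^sup>+\<omega>. f (r *\<^sub>R \<omega>) \<partial>sphere_measure)) \<partial>lborel)"
    by (intro nn_integral_cong) (simp add: nn_integral_multc nn_integral_cmult ac_simps)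
  also have "\<dots> = \<Phi> * (\<integral>\<^sup>+x. f x * ennreal (norm x powr (\<gamma> - real DIM('a))) \<partial>lborel)"
    by (simp add: nn_integral_cmult nn_integral_polar_weighted)
  finally show ?thesis
    by (simp add: \<Phi>_def)
qed

lemma norm_diff_scaleR_commute:
  fixes \<omega> \<sigma> :: "'a::real_inner"
  assumes "norm \<omega> = 1" "norm \<sigma> = 1"
  shows "norm (\<omega> - t *\<^sub>R \<sigma>) = norm (\<sigma> - t *\<^sub>R \<omega>)"
proof -
  have "\<omega> \<bullet> \<omega> = 1" "\<sigma> \<bullet> \<sigma> = 1"
    using assms by (simp_all add: norm_eq_1)
  then have "(norm (\<omega> - t *\<^sub>R \<sigma>))\<^sup>2 = (norm (\<sigma> - t *\<^sub>R \<omega>))\<^sup>2"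
    by (simp add: power2_norm_eq_inner inner_diff_left inner_diff_right inner_commute)
  then show ?thesis
    by (simp add: power2_eq_iff_nonneg)
qed

lemma polar_pair_integral_right:
  fixes f :: "'a::euclidean_space \<Rightarrow> ennreal" and e :: 'a
  assumes [measurable]: "f \<in> borel_measurable borel" and e: "norm e = 1" and t: "0 < t"
  shows "polar_pair_integral \<gamma> \<kappa> t (\<lambda>x y. f y) = ennreal (t powr - \<gamma>) *
    (\<integral>\<^sup>+\<sigma>. ennreal (norm (e - t *\<^sub>R \<sigma>) powr - \<kappa>) \<partial>sphere_measure) *
    (\<integral>\<^sup>+x. f x * ennreal (norm x powr (\<gamma> - real DIM('a))) \<partial>lborel)"
proof -
  define \<Phi> where "\<Phi> = (\<integral>\<^sup>+\<sigma>. ennreal (norm (e - t *\<^sub>R \<sigma>) powr - \<kappa>) \<partial>(sphere_measure :: 'a measure))"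
  have kernel: "(\<integral>\<^sup>+\<omega>. c * ennreal (norm (\<omega> - t *\<^sub>R \<sigma>) powr - \<kappa>) \<partial>sphere_measure) = c * \<Phi>"
    if "norm \<sigma> = 1" for c :: ennreal and \<sigma> :: 'a
  proof -
    have "(\<integral>\<^sup>+\<omega>. ennreal (norm (\<omega> - t *\<^sub>R \<sigma>) powr - \<kappa>) \<partial>sphere_measure) =
        (\<integral>\<^sup>+\<omega>. ennreal (norm (\<sigma> - t *\<^sub>R \<omega>) powr - \<kappa>) \<partial>(sphere_measure :: 'a measure))"
      using AE_sphere_measure_norm
      by (intro nn_integral_cong_AE) (auto elim!: eventually_mono simp: norm_diff_scaleR_commute that)
    also have "\<dots> = \<Phi>"
      using that e nn_integral_sphere_measure_norm_diff[of "\<lambda>n. ennreal (n powr - \<kappa>)" \<sigma> e t]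
      by (simp add: \<Phi>_def)
    finally show ?thesis
      by (simp add: nn_integral_cmult)
  qed
  have "polar_pair_integral \<gamma> \<kappa> t (\<lambda>x y. f y) = (\<integral>\<^sup>+r. indicator {0<..} r *
      (\<integral>\<^sup>+\<sigma>. \<integral>\<^sup>+\<omega>. ennreal (r powr (\<gamma> - 1)) * f ((r * t) *\<^sub>R \<sigma>) *
        ennreal (norm (\<omega> - t *\<^sub>R \<sigma>) powr - \<kappa>) \<partial>sphere_measure \<partial>sphere_measure) \<partial>lborel)"
    unfolding polar_pair_integral_def
    by (intro nn_integral_cong arg_cong2[where f="(*)"] refl pair_sigma_finite.Fubini'
        pair_sigma_finite_sphere_measure) measurable
  also have "\<dots> = (\<integral>\<^sup>+r. indicator {0<..} r *
      (\<integral>\<^sup>+\<sigma>. ennreal (r powr (\<gamma> - 1)) * f ((r * t) *\<^sub>R \<sigma>) * \<Phi> \<partial>sphere_measure) \<partial>lborel)"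
    using AE_sphere_measure_norm
    by (intro nn_integral_cong arg_cong2[where f="(*)"] refl nn_integral_cong_AE)
      (auto elim!: eventually_mono simp: kernel)
  also have "\<dots> = \<Phi> * (\<integral>\<^sup>+r. indicator {0<..} r * ennreal (r powr (\<gamma> - 1)) *
      (\<integral>\<^sup>+\<sigma>. f ((t * r) *\<^sub>R \<sigma>) \<partial>sphere_measure) \<partial>lborel)"
    by (simp add: nn_integral_multc nn_integral_cmult[symmetric] ac_simps)
  also have "\<dots> = \<Phi> * (ennreal (t powr - \<gamma>) * (\<integral>\<^sup>+r. indicator {0<..} r * ennreal (r powr (\<gamma> - 1)) *
      (\<integral>\<^sup>+\<sigma>. f (r *\<^sub>R \<sigma>) \<partial>sphere_measure) \<partial>lborel))"
    using nn_integral_radial_scale[of "\<lambda>\<rho>. \<integral>\<^sup>+\<sigma>. f (\<rho> *\<^sub>R \<sigma>) \<partial>sphere_measure" t "\<gamma> - 1"] t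
    by simp
  finally show ?thesis
    by (simp add: \<Phi>_def nn_integral_polar_weighted ac_simps)
qed

section \<open>The lower bound\<close>

lemma powr_convex_combination:
  fixes x y \<theta> q :: real
  assumes "0 \<le> x" "0 \<le> y" "0 < \<theta>" "\<theta> < 1" "1 \<le> q"
  shows "((1 - \<theta>) * x + \<theta> * y) powr q \<le> (1 - \<theta>) * x powr q + \<theta> * y powr q"
proof -
  consider "0 < x" "0 < y" | "x = 0" | "y = 0"
    using assms by linarith
  then show ?thesis
  proof cases
    case 1
    then show ?thesis
      using convex_onD[OF powr_convex[OF assms(5)], of \<theta> x y] assms by (simp add: algebra_simps)
  next
    case 2
    have "\<theta> powr q \<le> \<theta> powr 1"
      using assms by (intro powr_mono') auto
    then show ?thesis
      using 2 assms by (simp add: powr_mult mult_right_mono)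
  next
    case 3
    have "(1 - \<theta>) powr q \<le> (1 - \<theta>) powr 1"
      using assms by (intro powr_mono') auto
    then show ?thesis
      using 3 assms by (simp add: powr_mult mult_right_mono)
  qed
qed

lemma abs_powr_le_interpolation:
  fixes a b \<theta> q :: real
  assumes \<theta>: "0 < \<theta>" "\<theta> < 1" and q: "1 \<le> q"
  shows "\<bar>a\<bar> powr q \<le> (1 - \<theta>) powr (1 - q) * \<bar>a - b\<bar> powr q + \<theta> powr (1 - q) * \<bar>b\<bar> powr q"
proof -
  define x where "x = \<bar>a - b\<bar> / (1 - \<theta>)"
  define y where "y = \<bar>b\<bar> / \<theta>"
  have "\<bar>a\<bar> \<le> (1 - \<theta>) * x + \<theta> * y"
    using \<theta> by (simp add: x_def y_def abs_triangle_ineq2_sym)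
  then have "\<bar>a\<bar> powr q \<le> ((1 - \<theta>) * x + \<theta> * y) powr q"
    using q by (intro powr_mono2) auto
  also have "\<dots> \<le> (1 - \<theta>) * x powr q + \<theta> * y powr q"
    using \<theta> q by (intro powr_convex_combination) (auto simp: x_def y_def)
  also have "\<dots> = (1 - \<theta>) powr (1 - q) * \<bar>a - b\<bar> powr q + \<theta> powr (1 - q) * \<bar>b\<bar> powr q"
    using \<theta> by (simp add: x_def y_def powr_divide powr_diff)
  finally show ?thesis .
qed

lemma ennreal_interpolation_lower_bound:
  fixes \<theta> q x :: real and D :: ennreal
  assumes \<theta>: "0 < \<theta>" "\<theta> < 1" and x: "0 \<le> x"
    and le: "ennreal x \<le> ennreal ((1 - \<theta>) powr (1 - q)) * D + ennreal (\<theta> powr (1 - q)) * ennreal (\<theta> powr q * x)"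
  shows "ennreal ((1 - \<theta>) powr q * x) \<le> D"
proof (cases D)
  case (real d)
  have "\<theta> powr (1 - q) * (\<theta> powr q * x) = \<theta> * x"
    using \<theta> by (simp add: mult.assoc[symmetric] flip: powr_add)
  with le real x \<theta> have "x \<le> (1 - \<theta>) powr (1 - q) * d + \<theta> * x"
    by (simp add: ennreal_mult'[symmetric] flip: ennreal_plus)
  then have "(1 - \<theta>) powr (q - 1) * ((1 - \<theta>) * x) \<le> (1 - \<theta>) powr (q - 1) * ((1 - \<theta>) powr (1 - q) * d)"
    by (intro mult_left_mono) (auto simp: algebra_simps)
  moreover have "(1 - \<theta>) powr (q - 1) * (1 - \<theta>) = (1 - \<theta>) powr q"
    using \<theta> by (simp add: powr_diff)
  ultimately have "(1 - \<theta>) powr q * x \<le> d"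
    using \<theta> by (simp add: mult.assoc[symmetric] powr_add[symmetric])
  then show ?thesis
    by (simp add: real)
qed simp

lemma polar_pair_integral_abs_diff_ge_interpolation:
  fixes g h :: "'a::euclidean_space \<Rightarrow> 'a \<Rightarrow> real"
  assumes [measurable]: "case_prod g \<in> borel_measurable (borel \<Otimes>\<^sub>M borel)"
    "case_prod h \<in> borel_measurable (borel \<Otimes>\<^sub>M borel)"
    and \<theta>: "0 < \<theta>" "\<theta> < 1" and q: "1 \<le> q" and a: "0 \<le> a"
    and g: "polar_pair_integral \<gamma> \<kappa> t (\<lambda>x y. ennreal (\<bar>g x y\<bar> powr q)) = ennreal a"
    and h: "polar_pair_integral \<gamma> \<kappa> t (\<lambda>x y. ennreal (\<bar>h x y\<bar> powr q)) = ennreal (\<theta> powr q * a)"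
  shows "ennreal ((1 - \<theta>) powr q * a) \<le>
    polar_pair_integral \<gamma> \<kappa> t (\<lambda>x y. ennreal (\<bar>g x y - h x y\<bar> powr q))"
proof (rule ennreal_interpolation_lower_bound[OF \<theta> a])
  let ?\<alpha> = "ennreal ((1 - \<theta>) powr (1 - q))" and ?\<beta> = "ennreal (\<theta> powr (1 - q))"
  have "ennreal a \<le> polar_pair_integral \<gamma> \<kappa> t
      (\<lambda>x y. ?\<alpha> * ennreal (\<bar>g x y - h x y\<bar> powr q) + ?\<beta> * ennreal (\<bar>h x y\<bar> powr q))"
    unfolding g[symmetric] using abs_powr_le_interpolation[OF \<theta> q]
    by (intro polar_pair_integral_mono) (simp add: ennreal_mult'[symmetric] flip: ennreal_plus)
  also have "\<dots> = ?\<alpha> * polar_pair_integral \<gamma> \<kappa> t (\<lambda>x y. ennreal (\<bar>g x y - h x y\<bar> powr q)) +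
      ?\<beta> * ennreal (\<theta> powr q * a)"
    by (subst polar_pair_integral_linear_combination) (simp_all add: h)
  finally show "ennreal a \<le> ?\<alpha> * polar_pair_integral \<gamma> \<kappa> t (\<lambda>x y. ennreal (\<bar>g x y - h x y\<bar> powr q)) +
      ?\<beta> * ennreal (\<theta> powr q * a)" .
qed

lemma polar_pair_integral_abs_diff_ge:
  fixes g :: "'a::euclidean_space \<Rightarrow> real"
  assumes [measurable]: "g \<in> borel_measurable borel"
    and \<theta>: "0 < \<theta>" and q: "1 \<le> q" and a: "0 \<le> a"
    and left: "polar_pair_integral \<gamma> \<kappa> t (\<lambda>x y. ennreal (\<bar>g x\<bar> powr q)) = ennreal a"
    and right: "polar_pair_integral \<gamma> \<kappa> t (\<lambda>x y. ennreal (\<bar>g y\<bar> powr q)) = ennreal (\<theta> powr q * a)"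
  shows "ennreal (\<bar>1 - \<theta>\<bar> powr q * a) \<le>
    polar_pair_integral \<gamma> \<kappa> t (\<lambda>x y. ennreal (\<bar>g x - g y\<bar> powr q))"
proof -
  consider "\<theta> < 1" | "\<theta> = 1" | "1 < \<theta>" by linarith
  then show ?thesis
  proof cases
    case 1
    then show ?thesis
      using polar_pair_integral_abs_diff_ge_interpolation[of "\<lambda>x y. g x" "\<lambda>x y. g y" \<theta> q a] \<theta> q a left right
      by simp
  next
    case 3
    have "(1 / \<theta>) powr q * (\<theta> powr q * a) = a"
      using \<theta> by (simp add: powr_divide field_simps)
    then have "ennreal ((1 - 1 / \<theta>) powr q * (\<theta> powr q * a)) \<le>
        polar_pair_integral \<gamma> \<kappa> t (\<lambda>x y. ennreal (\<bar>g y - g x\<bar> powr q))"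
      using polar_pair_integral_abs_diff_ge_interpolation[of "\<lambda>x y. g y" "\<lambda>x y. g x" "1 / \<theta>" q "\<theta> powr q * a"]
        3 q a left right by simp
    moreover have "(1 - 1 / \<theta>) * \<theta> = \<bar>1 - \<theta>\<bar>"
      using 3 by (simp add: field_simps)
    then have "(1 - 1 / \<theta>) powr q * \<theta> powr q = \<bar>1 - \<theta>\<bar> powr q"
      using 3 by (simp add: powr_mult[symmetric])
    ultimately show ?thesis
      by (simp add: abs_minus_commute mult.assoc[symmetric])
  qed simp
qed

lemma nn_integral_sphere_kernel_finite:
  fixes e :: "'a::euclidean_space"
  assumes e: "norm e = 1" and t: "\<bar>t\<bar> \<noteq> 1" and \<kappa>: "0 \<le> \<kappa>"
  shows "(\<integral>\<^sup>+\<sigma>. ennreal (norm (e - t *\<^sub>R \<sigma>) powr - \<kappa>) \<partial>sphere_measure) < \<infinity>"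
proof -
  have "AE \<sigma> in sphere_measure. ennreal (norm (e - t *\<^sub>R \<sigma>) powr - \<kappa>) \<le> ennreal (\<bar>1 - \<bar>t\<bar>\<bar> powr - \<kappa>)"
    using AE_sphere_measure_norm
  proof eventually_elim
    case (elim \<sigma>)
    have "\<bar>1 - \<bar>t\<bar>\<bar> \<le> norm (e - t *\<^sub>R \<sigma>)"
      using norm_triangle_ineq3[of e "t *\<^sub>R \<sigma>"] e elim by simp
    with t \<kappa> show ?case
      by (intro ennreal_leI powr_mono2') auto
  qed
  then have "(\<integral>\<^sup>+\<sigma>. ennreal (norm (e - t *\<^sub>R \<sigma>) powr - \<kappa>) \<partial>sphere_measure) \<le>
      ennreal (\<bar>1 - \<bar>t\<bar>\<bar> powr - \<kappa>) * emeasure sphere_measure (space (sphere_measure :: 'a measure))"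
    by (subst nn_integral_const[symmetric]) (rule nn_integral_mono_AE)
  also have "\<dots> < \<infinity>"
    by (simp add: less_top[symmetric] ennreal_mult_eq_top_iff)
  finally show ?thesis .
qed

lemma polar_pair_integral_abs_diff_ge_weighted:
  fixes g :: "'a::euclidean_space \<Rightarrow> real" and e :: 'a and \<gamma> q :: real
  defines "I \<equiv> (\<integral>\<^sup>+x. ennreal (\<bar>g x\<bar> powr q) * ennreal (norm x powr (\<gamma> - real DIM('a))) \<partial>lborel)"
  assumes [measurable]: "g \<in> borel_measurable borel"
    and e: "norm e = 1" and t: "0 < t" "t \<noteq> 1" and q: "1 \<le> q" and \<kappa>: "0 \<le> \<kappa>" and I: "I < \<infinity>"
  shows "ennreal (\<bar>1 - t powr (- \<gamma> / q)\<bar> powr q) *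
      (\<integral>\<^sup>+\<sigma>. ennreal (norm (e - t *\<^sub>R \<sigma>) powr - \<kappa>) \<partial>sphere_measure) * I \<le>
    polar_pair_integral \<gamma> \<kappa> t (\<lambda>x y. ennreal (\<bar>g x - g y\<bar> powr q))"
proof -
  define \<Phi> where "\<Phi> = (\<integral>\<^sup>+\<sigma>. ennreal (norm (e - t *\<^sub>R \<sigma>) powr - \<kappa>) \<partial>(sphere_measure :: 'a measure))"
  define \<theta> where "\<theta> = t powr (- \<gamma> / q)"
  have "\<Phi> * I < \<infinity>"
    using nn_integral_sphere_kernel_finite[of e t \<kappa>] e t \<kappa> I by (simp add: \<Phi>_def ennreal_mult_less_top)
  then obtain a where a: "\<Phi> * I = ennreal a" "0 \<le> a"
    by (cases "\<Phi> * I") auto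
  have "polar_pair_integral \<gamma> \<kappa> t (\<lambda>x y. ennreal (\<bar>g x\<bar> powr q)) = ennreal a"
    using polar_pair_integral_left[of "\<lambda>x. ennreal (\<bar>g x\<bar> powr q)" e] e a
    by (simp add: \<Phi>_def I_def)
  moreover have "polar_pair_integral \<gamma> \<kappa> t (\<lambda>x y. ennreal (\<bar>g y\<bar> powr q)) = ennreal (\<theta> powr q * a)"
    using polar_pair_integral_right[of "\<lambda>x. ennreal (\<bar>g x\<bar> powr q)" e t] e t q a
    by (simp add: \<Phi>_def I_def \<theta>_def powr_powr ennreal_mult' mult.assoc)
  ultimately have "ennreal (\<bar>1 - \<theta>\<bar> powr q * a) \<le>
      polar_pair_integral \<gamma> \<kappa> t (\<lambda>x y. ennreal (\<bar>g x - g y\<bar> powr q))"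
    using t q a by (intro polar_pair_integral_abs_diff_ge) (simp_all add: \<theta>_def)
  then show ?thesis
    using a by (simp add: \<Phi>_def \<theta>_def ennreal_mult' mult.assoc)
qed

theorem mainTheorem4:
  fixes u :: "'a::euclidean_space \<Rightarrow> real"
    and s p q \<gamma> t :: real and e :: 'a
  assumes "0 < s" "s < 1" "1 \<le> q" "1 \<le> p"
    and "e \<in> Basis"
    and "u \<in> borel_measurable lebesgue"
    and "(\<integral>\<^sup>+ x. ennreal (\<bar>u x\<bar> powr q * norm x powr (\<gamma> - real DIM('a))) \<partial>lebesgue) < \<infinity>"
    and "0 < t" "t \<noteq> 1"
  shows "(\<integral>\<^sup>+ r. indicator {0<..} r *
            (\<integral>\<^sup>+ \<omega>. (\<integral>\<^sup>+ \<sigma>.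
               ennreal (r powr (\<gamma> - 1) * \<bar>u (r *\<^sub>R \<omega>) - u ((r * t) *\<^sub>R \<sigma>)\<bar> powr q
                        / norm (\<omega> - t *\<^sub>R \<sigma>) powr (real DIM('a) + s * p))
             \<partial>sphere_measure) \<partial>sphere_measure) \<partial>lborel)
         \<ge> ennreal (\<bar>1 - t powr (- \<gamma> / q)\<bar> powr q) * Phi e s p t *
            (\<integral>\<^sup>+ x. ennreal (\<bar>u x\<bar> powr q * norm x powr (\<gamma> - real DIM('a))) \<partial>lebesgue)"
proof -
  define \<kappa> where "\<kappa> = real DIM('a) + s * p"
  obtain g where [measurable]: "g \<in> borel_measurable borel" and "AE x in lborel. u x = g x"
    using completion_ex_borel_measurable_real[OF assms(6)] by auto
  then obtain N where N: "N \<in> null_sets lborel" and ug: "\<And>x. x \<notin> N \<Longrightarrow> u x = g x"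
    by (auto elim!: AE_E3)
  have I: "(\<integral>\<^sup>+ x. ennreal (\<bar>u x\<bar> powr q * norm x powr (\<gamma> - real DIM('a))) \<partial>lebesgue) =
      (\<integral>\<^sup>+x. ennreal (\<bar>g x\<bar> powr q) * ennreal (norm x powr (\<gamma> - real DIM('a))) \<partial>lborel)"
    unfolding nn_integral_completion using AE_not_in[OF N]
    by (intro nn_integral_cong_AE) (auto elim!: eventually_mono simp: ug ennreal_mult)
  have "ennreal (\<bar>1 - t powr (- \<gamma> / q)\<bar> powr q) * Phi e s p t *
      (\<integral>\<^sup>+ x. ennreal (\<bar>u x\<bar> powr q * norm x powr (\<gamma> - real DIM('a))) \<partial>lebesgue) \<le>
    polar_pair_integral \<gamma> \<kappa> t (\<lambda>x y. ennreal (\<bar>g x - g y\<bar> powr q))"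
    unfolding I Phi_def \<kappa>_def using assms I
    by (intro polar_pair_integral_abs_diff_ge_weighted) (auto intro: add_nonneg_nonneg)
  also have "\<dots> = polar_pair_integral \<gamma> \<kappa> t (\<lambda>x y. ennreal (\<bar>u x - u y\<bar> powr q))"
    using N assms(8) by (intro polar_pair_integral_cong_null) (auto simp: ug)
  also have "\<dots> = (\<integral>\<^sup>+ r. indicator {0<..} r * (\<integral>\<^sup>+ \<omega>. \<integral>\<^sup>+ \<sigma>.
      ennreal (r powr (\<gamma> - 1) * \<bar>u (r *\<^sub>R \<omega>) - u ((r * t) *\<^sub>R \<sigma>)\<bar> powr q / norm (\<omega> - t *\<^sub>R \<sigma>) powr \<kappa>)
      \<partial>sphere_measure \<partial>sphere_measure) \<partial>lborel)"
    by (rule polar_pair_integral_of_real[symmetric]) simp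
  finally show ?thesis
    by (simp add: \<kappa>_def)
qed

end
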